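(* Let $D\ge2$ be an integer, let $(\rho^0_{kl})_{k,l=1}^D$ be a $D\times D$ density matrix (positive semidefinite, trace one), and let $(U_{mn})_{m,n=1}^D$ be a unitary matrix. Define $\mu_n=\sum_k|U_{nk}|^2\rho^0_{kk}$, $D_{\mathrm{eff}}=\bigl[\sum_n(\rho^0_{nn})^2\bigr]^{-1}$, $$\nu_{mn}=\sum_{k\neq l}U_{mk}U_{ml}^*U_{nk}^*U_{nl}|\rho^0_{kl}|^2,\qquad R=\sum_{m,n}\nu_{mn}\ln\mu_m\ln\mu_n .$$ Then $$R\le\frac{5(\ln D)^2}{D_{\mathrm{eff}}^{1/2}}+\frac{8(\ln D)^2}{D}+\frac{4(\ln D)^2}{D^2}.$$
   Context: In the sum defining $R$, terms with $\mu_m=0$ or $\mu_n=0$ are taken to be $0$ (for such indices $\nu_{mn}=0$). *)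

theory Defs
  imports Complex_Main
begin

text \<open>D x D complex matrices are represented as functions nat => nat => complex,
  with indices ranging over {0..<D} (i.e. the paper's 1..D shifted by one).\<close>

definition density_matrix :: "nat \<Rightarrow> (nat \<Rightarrow> nat \<Rightarrow> complex) \<Rightarrow> bool" where
  "density_matrix D \<rho> \<longleftrightarrow>
     (\<forall>x :: nat \<Rightarrow> complex.
        let q = (\<Sum>k<D. \<Sum>l<D. cnj (x k) * \<rho> k l * x l) in Im q = 0 \<and> Re q \<ge> 0)
     \<and> (\<Sum>k<D. \<rho> k k) = 1"

definition unitary_matrix :: "nat \<Rightarrow> (nat \<Rightarrow> nat \<Rightarrow> complex) \<Rightarrow> bool" where
  "unitary_matrix D U \<longleftrightarrow>
     (\<forall>m<D. \<forall>n<D. (\<Sum>k<D. U m k * cnj (U n k)) = (if m = n then 1 else 0))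
     \<and> (\<forall>m<D. \<forall>n<D. (\<Sum>k<D. cnj (U k m) * U k n) = (if m = n then 1 else 0))"

definition mu :: "nat \<Rightarrow> (nat \<Rightarrow> nat \<Rightarrow> complex) \<Rightarrow> (nat \<Rightarrow> nat \<Rightarrow> complex) \<Rightarrow> nat \<Rightarrow> real" where
  "mu D U \<rho> n = (\<Sum>k<D. (cmod (U n k))\<^sup>2 * Re (\<rho> k k))"

definition D_eff :: "nat \<Rightarrow> (nat \<Rightarrow> nat \<Rightarrow> complex) \<Rightarrow> real" where
  "D_eff D \<rho> = 1 / (\<Sum>n<D. (Re (\<rho> n n))\<^sup>2)"

definition nu :: "nat \<Rightarrow> (nat \<Rightarrow> nat \<Rightarrow> complex) \<Rightarrow> (nat \<Rightarrow> nat \<Rightarrow> complex) \<Rightarrow> nat \<Rightarrow> nat \<Rightarrow> complex" where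
  "nu D U \<rho> m n = (\<Sum>k<D. \<Sum>l<D. if k = l then 0 else
       U m k * cnj (U m l) * cnj (U n k) * U n l * complex_of_real ((cmod (\<rho> k l))\<^sup>2))"

text \<open>R is real (nu n m = cnj (nu m n)); we take its real part. Terms with
  mu_m = 0 or mu_n = 0 are 0 by convention.\<close>
definition R_val :: "nat \<Rightarrow> (nat \<Rightarrow> nat \<Rightarrow> complex) \<Rightarrow> (nat \<Rightarrow> nat \<Rightarrow> complex) \<Rightarrow> real" where
  "R_val D U \<rho> = Re (\<Sum>m<D. \<Sum>n<D.
       if mu D U \<rho> m = 0 \<or> mu D U \<rho> n = 0 then 0
       else nu D U \<rho> m n * complex_of_real (ln (mu D U \<rho> m) * ln (mu D U \<rho> n)))"

end

theory Submission
  imports Defs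
begin

text \<open>
  Put \<open>a m = ln (\<mu> m)\<close> and \<open>w k l = (\<Sum>m. U m k * cnj (U m l) * a m)\<close>. Expanding \<open>\<nu>\<close>
  gives \<open>R = (\<Sum>k\<noteq>l. \<bar>\<rho> k l\<bar>\<^sup>2 * \<bar>w k l\<bar>\<^sup>2)\<close>. Positivity of \<open>\<rho>\<close> gives
  \<open>\<bar>\<rho> k l\<bar>\<^sup>2 \<le> \<rho> k k * \<rho> l l \<le> \<rho> k k / sqrt D_eff\<close>, and unitarity of \<open>U\<close> gives
  \<open>(\<Sum>l. \<bar>w k l\<bar>\<^sup>2) = (\<Sum>m. \<bar>U m k\<bar>\<^sup>2 * (a m)\<^sup>2)\<close>; hence
  \<open>R \<le> (\<Sum>m. \<mu> m * (ln (\<mu> m))\<^sup>2) / sqrt D_eff\<close>. The elementary bound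
  \<open>x * (ln x)\<^sup>2 \<le> 4 (ln D)\<^sup>2 x + 8 (ln D)\<^sup>2 / D\<^sup>2\<close> on \<open>[0, 1]\<close> (for \<open>x \<ge> 1/D\<^sup>2\<close> use
  \<open>\<bar>ln x\<bar> \<le> 2 ln D\<close>, below that \<open>y ln (1/y) \<le> 1/e\<close>) and \<open>\<Sum>m. \<mu> m = 1\<close> finish the proof.
\<close>

lemma exp_one_ge: "53/20 \<le> exp (1::real)"
proof -
  have "(53/20::real) \<le> (1 + 1 / real 20) ^ 20" by (simp add: power_divide)
  also have "\<dots> \<le> exp 1" by (rule exp_ge_one_plus_x_over_n_power_n) auto
  finally show ?thesis .
qed

lemma ln_two_ge: "65/100 \<le> ln (2::real)"
proof -
  have "(1/2::real) \<le> (1 - (65/100) / real 20) ^ 20" by (simp add: power_divide)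
  also have "\<dots> \<le> exp (-(65/100))" by (rule exp_ge_one_minus_x_over_n_power_n) auto
  finally have "exp (65/100::real) \<le> 2" by (simp add: exp_minus field_simps)
  thus ?thesis by (subst ln_ge_iff) auto
qed

lemma mult_ln_inverse_le:
  fixes y :: real assumes "0 < y" shows "y * ln (1/y) \<le> 1 / exp 1"
proof -
  have "ln ((1/y) / exp 1) \<le> (1/y) / exp 1 - 1" using assms by (intro ln_le_minus_one) auto
  hence "ln (1/y) \<le> (1/y) / exp 1" using assms by (simp add: ln_div ln_mult)
  hence "y * ln (1/y) \<le> y * ((1/y) / exp 1)" using assms by (intro mult_left_mono) auto
  thus ?thesis using assms by simp
qed

lemma mult_ln_inverse_squared_le:
  fixes y :: real assumes "0 < y" "y \<le> 1" shows "y * (ln (1/y))\<^sup>2 \<le> 4 / (exp 1)\<^sup>2"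
proof -
  define s where "s = sqrt y"
  have s: "0 < s" "s \<le> 1" "y = s\<^sup>2" using assms by (auto simp: s_def)
  have "y * (ln (1/y))\<^sup>2 = 4 * (s * ln (1/s))\<^sup>2"
    using s by (simp add: ln_div ln_realpow power_mult_distrib)
  also have "\<dots> \<le> 4 * (1 / exp 1)\<^sup>2"
    using s mult_ln_inverse_le[of s] by (intro mult_left_mono power_mono) auto
  finally show ?thesis by (simp add: power_divide)
qed

lemma inverse_exp_one_bound:
  fixes L :: real
  assumes L: "65/100 \<le> L"
  shows "L / exp 1 + 1 / (exp 1)\<^sup>2 \<le> L\<^sup>2"
proof -
  have e: "0 \<le> 1 / exp (1::real)" "1 / exp (1::real) \<le> 20/53" using exp_one_ge by (auto simp: field_simps)
  hence "L * (1 / exp 1) \<le> L * (20/53)" "(1 / exp 1)\<^sup>2 \<le> (20/53::real)\<^sup>2"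
    using L by (intro mult_left_mono power_mono; simp)+
  moreover have "L * (20/53) + 65/100 * (65/100 - 20/53) \<le> L\<^sup>2"
  proof -
    have "0 \<le> (L - 65/100) * (L + 65/100 - 20/53)" using L by simp
    thus ?thesis by (simp add: power2_eq_square field_simps)
  qed
  ultimately show ?thesis by (simp add: power_divide)
qed

lemma mult_ln_squared_le_large:
  fixes x N :: real
  assumes "0 < N" "1 / N\<^sup>2 \<le> x" "x \<le> 1"
  shows "x * (ln x)\<^sup>2 \<le> 4 * (ln N)\<^sup>2 * x"
proof -
  have "0 < 1 / N\<^sup>2" using assms(1) by simp
  hence "0 < x" using assms(2) by linarith
  hence "ln (1 / N\<^sup>2) \<le> ln x" using \<open>0 < 1 / N\<^sup>2\<close> assms(2) by (simp only: ln_le_cancel_iff)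
  hence "- 2 * ln N \<le> ln x" "ln x \<le> 0" using assms \<open>0 < x\<close> by (simp_all add: ln_div ln_realpow)
  hence "(- ln x)\<^sup>2 \<le> (2 * ln N)\<^sup>2" by (intro power_mono) auto
  hence "(ln x)\<^sup>2 \<le> 4 * (ln N)\<^sup>2" by (simp add: power_mult_distrib)
  thus ?thesis using \<open>0 < x\<close> by (simp add: mult_left_mono mult.commute)
qed

lemma mult_ln_squared_le_small:
  fixes x N :: real
  assumes N: "2 \<le> N" and x: "0 < x" "x \<le> 1 / N\<^sup>2"
  shows "x * (ln x)\<^sup>2 \<le> 8 * (ln N)\<^sup>2 / N\<^sup>2"
proof -
  define L where "L = ln N"
  define y where "y = x * N\<^sup>2"
  have "ln 2 \<le> L" using N by (simp add: L_def)
  hence L: "65/100 \<le> L" using ln_two_ge by linarith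
  have y: "0 < y" "y \<le> 1" using x N by (auto simp: y_def field_simps)
  \<comment> \<open>\<open>ln (1/x) = 2 L + ln (1/y)\<close> with both summands nonnegative\<close>
  have "x * (ln x)\<^sup>2 = (y * (4 * L\<^sup>2) + 4 * L * (y * ln (1/y)) + y * (ln (1/y))\<^sup>2) / N\<^sup>2"
    using N y by (simp add: y_def L_def ln_mult ln_div ln_realpow power2_eq_square field_simps)
  also have "\<dots> \<le> (4 * L\<^sup>2 + 4 * L * (1 / exp 1) + 4 / (exp 1)\<^sup>2) / N\<^sup>2"
    using y L mult_ln_inverse_le[of y] mult_ln_inverse_squared_le[of y]
    by (intro divide_right_mono add_mono mult_left_mono) auto
  also have "\<dots> \<le> 8 * L\<^sup>2 / N\<^sup>2"
    using inverse_exp_one_bound[OF L] by (intro divide_right_mono) (simp_all add: power_divide)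
  finally show ?thesis by (simp add: L_def)
qed

lemma mult_ln_squared_le:
  fixes x N :: real
  assumes "2 \<le> N" "0 \<le> x" "x \<le> 1"
  shows "x * (ln x)\<^sup>2 \<le> 4 * (ln N)\<^sup>2 * x + 8 * (ln N)\<^sup>2 / N\<^sup>2"
proof -
  have "0 \<le> 4 * (ln N)\<^sup>2 * x" "0 \<le> 8 * (ln N)\<^sup>2 / N\<^sup>2" using assms by simp_all
  moreover have "x * (ln x)\<^sup>2 \<le> 4 * (ln N)\<^sup>2 * x \<or> x * (ln x)\<^sup>2 \<le> 8 * (ln N)\<^sup>2 / N\<^sup>2"
    using assms mult_ln_squared_le_large[of N x] mult_ln_squared_le_small[of N x]
    by (cases "x = 0"; cases "1 / N\<^sup>2 \<le> x") auto
  ultimately show ?thesis by linarith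
qed

lemma psd_binary_quadratic_form_det:
  fixes a b d :: real
  assumes nonneg: "\<And>s t. 0 \<le> a * s\<^sup>2 - 2 * b * s * t + d * t\<^sup>2"
  shows "b\<^sup>2 \<le> a * d"
proof (cases "a = 0")
  case True
  have "b = 0"
  proof (rule ccontr)
    assume "b \<noteq> 0"
    then show False using nonneg[of "(d + 1) / (2 * b)" 1] True by (simp add: field_simps)
  qed
  thus ?thesis using True by simp
next
  case False
  have "0 \<le> a" using nonneg[of 1 0] by simp
  hence "0 < a" using False by simp
  moreover have "0 \<le> a * (a * d - b\<^sup>2)" using nonneg[of b a] by (simp add: power2_eq_square algebra_simps)
  ultimately show ?thesis by (simp add: zero_le_mult_iff)
qed

definition quad_form :: "nat \<Rightarrow> (nat \<Rightarrow> nat \<Rightarrow> complex) \<Rightarrow> (nat \<Rightarrow> complex) \<Rightarrow> complex" where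
  "quad_form D \<rho> x = (\<Sum>k<D. \<Sum>l<D. cnj (x k) * \<rho> k l * x l)"

lemma density_matrixD:
  assumes "density_matrix D \<rho>"
  shows "Im (quad_form D \<rho> x) = 0" "0 \<le> Re (quad_form D \<rho> x)" "(\<Sum>k<D. \<rho> k k) = 1"
  using assms by (auto simp: density_matrix_def quad_form_def Let_def)

lemma quad_form_supported:
  assumes "k < D" "l < D" and supp: "\<And>i. i \<noteq> k \<Longrightarrow> i \<noteq> l \<Longrightarrow> x i = 0"
  shows "quad_form D \<rho> x = (\<Sum>i\<in>{k, l}. \<Sum>j\<in>{k, l}. cnj (x i) * \<rho> i j * x j)"
proof -
  have sub: "{k, l} \<subseteq> {..<D}" using assms(1,2) by auto
  have "quad_form D \<rho> x = (\<Sum>i\<in>{k, l}. \<Sum>j<D. cnj (x i) * \<rho> i j * x j)"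
    unfolding quad_form_def using supp by (intro sum.mono_neutral_right[OF _ sub]) auto
  also have "\<dots> = (\<Sum>i\<in>{k, l}. \<Sum>j\<in>{k, l}. cnj (x i) * \<rho> i j * x j)"
    using supp by (intro sum.cong refl sum.mono_neutral_right[OF _ sub]) auto
  finally show ?thesis .
qed

lemma density_matrix_diag:
  assumes "density_matrix D \<rho>" "k < D"
  shows "\<rho> k k = complex_of_real (Re (\<rho> k k))" "0 \<le> Re (\<rho> k k)"
proof -
  have "quad_form D \<rho> (\<lambda>i. if i = k then 1 else 0) = \<rho> k k"
    using assms(2) by (subst quad_form_supported[where l = k]) auto
  thus "\<rho> k k = complex_of_real (Re (\<rho> k k))" "0 \<le> Re (\<rho> k k)"
    using density_matrixD(1,2)[OF assms(1), of "\<lambda>i. if i = k then 1 else 0"] by (auto simp: complex_eq_iff)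
qed

lemma quad_form_two_point:
  assumes "k < D" "l < D" "k \<noteq> l"
  shows "quad_form D \<rho> (\<lambda>i. if i = k then \<alpha> else if i = l then \<beta> else 0)
    = cnj \<alpha> * \<rho> k k * \<alpha> + cnj \<alpha> * \<rho> k l * \<beta> + cnj \<beta> * \<rho> l k * \<alpha> + cnj \<beta> * \<rho> l l * \<beta>"
  using assms by (subst quad_form_supported[of k D l]) (simp_all add: add_ac)

lemma density_matrix_hermitian:
  assumes "density_matrix D \<rho>" "k < D" "l < D"
  shows "\<rho> l k = cnj (\<rho> k l)"
proof (cases "k = l")
  case True
  then show ?thesis using density_matrix_diag(1)[OF assms(1,2)] by (metis complex_cnj_complex_of_real)
next
  case False
  have "Im (\<rho> k k) = 0" "Im (\<rho> l l) = 0"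
    using density_matrix_diag(1)[OF assms(1,2)] density_matrix_diag(1)[OF assms(1,3)]
    by (metis Im_complex_of_real)+
  moreover have form: "Im (cnj \<alpha> * \<rho> k k * \<alpha> + cnj \<alpha> * \<rho> k l * \<beta> + cnj \<beta> * \<rho> l k * \<alpha> + cnj \<beta> * \<rho> l l * \<beta>) = 0"
    for \<alpha> \<beta>
    using density_matrixD(1)[OF assms(1)] quad_form_two_point[OF assms(2,3) False] by metis
  ultimately show ?thesis using form[of 1 1] form[of 1 \<i>] by (simp add: complex_eq_iff)
qed

lemma density_matrix_offdiag_le:
  assumes "density_matrix D \<rho>" "k < D" "l < D"
  shows "(cmod (\<rho> k l))\<^sup>2 \<le> Re (\<rho> k k) * Re (\<rho> l l)"
proof (cases "k = l")
  case True
  have "cmod (\<rho> k k) = Re (\<rho> k k)"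
    using density_matrix_diag[OF assms(1,2)] by (metis norm_of_real abs_of_nonneg)
  then show ?thesis using True by (simp add: power2_eq_square)
next
  case False
  define c where "c = (cmod (\<rho> k l))\<^sup>2"
  define p q where "p = Re (\<rho> k k)" and "q = Re (\<rho> l l)"
  have diag: "\<rho> k k = complex_of_real p" "\<rho> l l = complex_of_real q"
    using density_matrix_diag(1)[OF assms(1,2)] density_matrix_diag(1)[OF assms(1,3)] by (simp_all add: p_def q_def)
  have "0 \<le> p * s\<^sup>2 - 2 * c * s * t + c * q * t\<^sup>2" for s t :: real
  proof -
    \<comment> \<open>test vector \<open>s e\<^sub>k - t \<rho>\<^sub>l\<^sub>k e\<^sub>l\<close>\<close>
    let ?\<alpha> = "complex_of_real s" and ?\<beta> = "- complex_of_real t * cnj (\<rho> k l)" and ?z = "\<rho> k l"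
    have "quad_form D \<rho> (\<lambda>i. if i = k then ?\<alpha> else if i = l then ?\<beta> else 0)
        = cnj ?\<alpha> * \<rho> k k * ?\<alpha> + cnj ?\<alpha> * \<rho> k l * ?\<beta> + cnj ?\<beta> * \<rho> l k * ?\<alpha> + cnj ?\<beta> * \<rho> l l * ?\<beta>"
      by (rule quad_form_two_point[OF assms(2,3) False])
    also have "\<dots> = of_real p * ?\<alpha>\<^sup>2 - 2 * (?z * cnj ?z) * ?\<alpha> * of_real t + (?z * cnj ?z) * of_real q * (of_real t)\<^sup>2"
      unfolding diag density_matrix_hermitian[OF assms] by (simp add: power2_eq_square algebra_simps)
    also have "\<dots> = complex_of_real (p * s\<^sup>2 - 2 * c * s * t + c * q * t\<^sup>2)"
      by (simp add: c_def complex_norm_square[symmetric])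
    finally show ?thesis using density_matrixD(2)[OF assms(1)] by (metis Re_complex_of_real)
  qed
  hence "c\<^sup>2 \<le> p * (c * q)"
    by (intro psd_binary_quadratic_form_det) (simp add: algebra_simps)
  moreover have "0 \<le> c" by (simp add: c_def)
  ultimately have "c \<le> p * q"
    by (cases "c = 0") (auto simp: power2_eq_square density_matrix_diag(2)[OF assms(1)] assms p_def q_def)
  thus ?thesis by (simp add: c_def p_def q_def)
qed

lemma density_matrix_trace:
  assumes "density_matrix D \<rho>"
  shows "(\<Sum>k<D. Re (\<rho> k k)) = 1"
  using density_matrixD(3)[OF assms] by (metis Re_sum one_complex.simps(1))

lemma density_matrix_diag_le_one:
  assumes "density_matrix D \<rho>" "k < D"
  shows "Re (\<rho> k k) \<le> 1"
  using member_le_sum[of k "{..<D}" "\<lambda>k. Re (\<rho> k k)"] density_matrix_diag(2)[OF assms(1)]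
    density_matrix_trace[OF assms(1)] assms(2) by auto

lemma density_matrix_purity_le_one:
  assumes "density_matrix D \<rho>"
  shows "(\<Sum>k<D. (Re (\<rho> k k))\<^sup>2) \<le> 1"
proof -
  have "(\<Sum>k<D. (Re (\<rho> k k))\<^sup>2) \<le> (\<Sum>k<D. Re (\<rho> k k))"
    using density_matrix_diag(2)[OF assms] density_matrix_diag_le_one[OF assms]
    by (intro sum_mono) (simp add: power2_eq_square mult_left_le)
  thus ?thesis using density_matrix_trace[OF assms] by simp
qed

lemma unitary_matrix_col_norm:
  assumes "unitary_matrix D U" "k < D"
  shows "(\<Sum>m<D. (cmod (U m k))\<^sup>2) = 1"
proof -
  have "(\<Sum>m<D. cnj (U m k) * U m k) = 1" using assms unfolding unitary_matrix_def by auto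
  hence "complex_of_real (\<Sum>m<D. (cmod (U m k))\<^sup>2) = 1"
    unfolding of_real_sum complex_norm_square by (simp add: mult.commute)
  thus ?thesis by (metis of_real_eq_1_iff)
qed

lemma unitary_matrix_rows_orthonormal:
  assumes "unitary_matrix D U" "m < D" "n < D"
  shows "(\<Sum>l<D. U m l * cnj (U n l)) = (if m = n then 1 else 0)"
  using assms unfolding unitary_matrix_def by blast

lemma unitary_matrix_norm_preserving:
  assumes "unitary_matrix D U"
  shows "(\<Sum>l<D. (cmod (\<Sum>m<D. X m * cnj (U m l)))\<^sup>2) = (\<Sum>m<D. (cmod (X m))\<^sup>2)"
proof -
  have "complex_of_real (\<Sum>l<D. (cmod (\<Sum>m<D. X m * cnj (U m l)))\<^sup>2)
      = (\<Sum>l<D. \<Sum>m<D. \<Sum>n<D. X m * cnj (X n) * (U n l * cnj (U m l)))"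
    unfolding of_real_sum complex_norm_square cnj_sum sum_product
    by (intro sum.cong refl) (simp add: algebra_simps)
  also have "\<dots> = (\<Sum>m<D. \<Sum>n<D. \<Sum>l<D. X m * cnj (X n) * (U n l * cnj (U m l)))"
    by (subst sum.swap) (rule sum.cong[OF refl], rule sum.swap)
  also have "\<dots> = (\<Sum>m<D. \<Sum>n<D. if n = m then X m * cnj (X n) else 0)"
    unfolding sum_distrib_left[symmetric]
    by (intro sum.cong refl) (simp add: unitary_matrix_rows_orthonormal[OF assms])
  also have "\<dots> = (\<Sum>m<D. X m * cnj (X m))" by simp
  also have "\<dots> = complex_of_real (\<Sum>m<D. (cmod (X m))\<^sup>2)"
    unfolding of_real_sum complex_norm_square ..
  finally show ?thesis by (simp only: of_real_eq_iff)
qed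

lemma mu_nonneg:
  assumes "density_matrix D \<rho>"
  shows "0 \<le> mu D U \<rho> m"
  unfolding mu_def using density_matrix_diag(2)[OF assms] by (intro sum_nonneg) auto

lemma sum_mu:
  assumes "density_matrix D \<rho>" "unitary_matrix D U"
  shows "(\<Sum>m<D. mu D U \<rho> m) = 1"
proof -
  have "(\<Sum>m<D. mu D U \<rho> m) = (\<Sum>k<D. (\<Sum>m<D. (cmod (U m k))\<^sup>2) * Re (\<rho> k k))"
    unfolding mu_def sum_distrib_right by (rule sum.swap)
  also have "\<dots> = 1"
    using unitary_matrix_col_norm[OF assms(2)] density_matrix_trace[OF assms(1)] by simp
  finally show ?thesis .
qed

lemma mu_le_one:
  assumes "density_matrix D \<rho>" "unitary_matrix D U" "m < D"
  shows "mu D U \<rho> m \<le> 1"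
  using member_le_sum[of m "{..<D}" "mu D U \<rho>"] mu_nonneg[OF assms(1)] sum_mu[OF assms(1,2)] assms(3)
  by auto

lemma sum_mu_mult_ln_squared_le:
  assumes "density_matrix D \<rho>" "unitary_matrix D U" "2 \<le> D"
  shows "(\<Sum>m<D. mu D U \<rho> m * (ln (mu D U \<rho> m))\<^sup>2) \<le> 4 * (ln D)\<^sup>2 + 8 * (ln D)\<^sup>2 / D"
proof -
  have "(\<Sum>m<D. mu D U \<rho> m * (ln (mu D U \<rho> m))\<^sup>2)
      \<le> (\<Sum>m<D. 4 * (ln D)\<^sup>2 * mu D U \<rho> m + 8 * (ln D)\<^sup>2 / (real D)\<^sup>2)"
    using assms mu_nonneg mu_le_one by (intro sum_mono mult_ln_squared_le) auto
  also have "\<dots> = 4 * (ln D)\<^sup>2 + 8 * (ln D)\<^sup>2 / D"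
    using assms by (simp add: sum.distrib sum_mu sum_distrib_left[symmetric] power2_eq_square)
  finally show ?thesis .
qed

lemma sum_swap_pairs:
  "(\<Sum>m\<in>A. \<Sum>n\<in>B. \<Sum>k\<in>C. \<Sum>l\<in>E. f m n k l) = (\<Sum>k\<in>C. \<Sum>l\<in>E. \<Sum>m\<in>A. \<Sum>n\<in>B. f m n k l)"
proof -
  have "(\<Sum>n\<in>B. \<Sum>k\<in>C. \<Sum>l\<in>E. f m n k l) = (\<Sum>k\<in>C. \<Sum>l\<in>E. \<Sum>n\<in>B. f m n k l)" for m
    by (subst sum.swap) (rule sum.cong[OF refl], rule sum.swap)
  hence "(\<Sum>m\<in>A. \<Sum>n\<in>B. \<Sum>k\<in>C. \<Sum>l\<in>E. f m n k l) = (\<Sum>m\<in>A. \<Sum>k\<in>C. \<Sum>l\<in>E. \<Sum>n\<in>B. f m n k l)"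
    by simp
  also have "\<dots> = (\<Sum>k\<in>C. \<Sum>l\<in>E. \<Sum>m\<in>A. \<Sum>n\<in>B. f m n k l)"
    by (subst sum.swap) (rule sum.cong[OF refl], rule sum.swap)
  finally show ?thesis .
qed

lemma nu_quadratic_form_eq:
  "(\<Sum>m<D. \<Sum>n<D. nu D U \<rho> m n * complex_of_real (a m * a n))
    = complex_of_real (\<Sum>k<D. \<Sum>l<D. if k = l then 0 else
        (cmod (\<rho> k l))\<^sup>2 * (cmod (\<Sum>m<D. U m k * cnj (U m l) * complex_of_real (a m)))\<^sup>2)"
proof -
  define w where "w k l m = U m k * cnj (U m l) * complex_of_real (a m)" for k l m
  have "(\<Sum>m<D. \<Sum>n<D. nu D U \<rho> m n * complex_of_real (a m * a n))
      = (\<Sum>m<D. \<Sum>n<D. \<Sum>k<D. \<Sum>l<D. if k = l then 0 else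
          complex_of_real ((cmod (\<rho> k l))\<^sup>2) * (w k l m * cnj (w k l n)))"
    unfolding nu_def sum_distrib_right by (intro sum.cong refl) (simp add: w_def algebra_simps)
  also have "\<dots> = (\<Sum>k<D. \<Sum>l<D. \<Sum>m<D. \<Sum>n<D. if k = l then 0 else
          complex_of_real ((cmod (\<rho> k l))\<^sup>2) * (w k l m * cnj (w k l n)))"
    by (rule sum_swap_pairs)
  also have "\<dots> = (\<Sum>k<D. \<Sum>l<D. if k = l then 0 else
      complex_of_real ((cmod (\<rho> k l))\<^sup>2) * ((\<Sum>m<D. w k l m) * cnj (\<Sum>n<D. w k l n)))"
    unfolding cnj_sum sum_product by (intro sum.cong refl) (simp add: sum_distrib_left)
  also have "\<dots> = complex_of_real (\<Sum>k<D. \<Sum>l<D. if k = l then 0 else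
        (cmod (\<rho> k l))\<^sup>2 * (cmod (\<Sum>m<D. w k l m))\<^sup>2)"
    unfolding of_real_sum
    by (intro sum.cong refl) (simp only: if_distrib[of complex_of_real] of_real_0 of_real_mult complex_norm_square)
  finally show ?thesis by (simp only: w_def)
qed

lemma nu_quadratic_form_le:
  assumes dens: "density_matrix D \<rho>" and uni: "unitary_matrix D U"
  shows "Re (\<Sum>m<D. \<Sum>n<D. nu D U \<rho> m n * complex_of_real (a m * a n))
    \<le> sqrt (\<Sum>k<D. (Re (\<rho> k k))\<^sup>2) * (\<Sum>m<D. mu D U \<rho> m * (a m)\<^sup>2)"
proof -
  define p where "p k = Re (\<rho> k k)" for k
  define s where "s = sqrt (\<Sum>k<D. (p k)\<^sup>2)"
  define W where "W k l = (cmod (\<Sum>m<D. U m k * cnj (U m l) * complex_of_real (a m)))\<^sup>2" for k l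
  have p: "0 \<le> p k" if "k < D" for k using density_matrix_diag(2)[OF dens that] by (simp add: p_def)
  have p_le_s: "p k \<le> s" if "k < D" for k
    using p[OF that] real_sqrt_le_mono[OF member_le_sum[of k "{..<D}" "\<lambda>k. (p k)\<^sup>2"]] that
    by (simp add: s_def)
  have row_sum_W: "(\<Sum>l<D. W k l) = (\<Sum>m<D. (cmod (U m k))\<^sup>2 * (a m)\<^sup>2)" for k
  proof -
    have "(\<Sum>l<D. W k l) = (\<Sum>l<D. (cmod (\<Sum>m<D. (U m k * complex_of_real (a m)) * cnj (U m l)))\<^sup>2)"
      unfolding W_def by (simp add: ac_simps)
    also have "\<dots> = (\<Sum>m<D. (cmod (U m k))\<^sup>2 * (a m)\<^sup>2)"
      unfolding unitary_matrix_norm_preserving[OF uni] by (simp add: norm_mult power_mult_distrib)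
    finally show ?thesis .
  qed
  have "Re (\<Sum>m<D. \<Sum>n<D. nu D U \<rho> m n * complex_of_real (a m * a n))
      = (\<Sum>k<D. \<Sum>l<D. if k = l then 0 else (cmod (\<rho> k l))\<^sup>2 * W k l)"
    unfolding nu_quadratic_form_eq W_def by simp
  also have "\<dots> \<le> (\<Sum>k<D. \<Sum>l<D. p k * s * W k l)"
  proof (intro sum_mono)
    fix k l assume "k \<in> {..<D}" "l \<in> {..<D}"
    hence "(cmod (\<rho> k l))\<^sup>2 \<le> p k * s" "0 \<le> p k * s"
      using density_matrix_offdiag_le[OF dens, of k l] p[of k] p[of l] p_le_s[of l]
      by (auto simp: p_def intro: order.trans mult_left_mono)
    thus "(if k = l then 0 else (cmod (\<rho> k l))\<^sup>2 * W k l) \<le> p k * s * W k l"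
      by (auto simp: W_def intro: mult_right_mono)
  qed
  also have "\<dots> = s * (\<Sum>k<D. p k * (\<Sum>l<D. W k l))"
    by (simp add: sum_distrib_left mult_ac)
  also have "\<dots> = s * (\<Sum>k<D. \<Sum>m<D. (cmod (U m k))\<^sup>2 * p k * (a m)\<^sup>2)"
    unfolding row_sum_W sum_distrib_left by (simp add: mult_ac)
  also have "\<dots> = s * (\<Sum>m<D. mu D U \<rho> m * (a m)\<^sup>2)"
    unfolding mu_def p_def sum_distrib_right by (subst sum.swap) (rule refl)
  finally show ?thesis by (simp add: s_def p_def)
qed

text \<open>Since \<open>ln 0 = 0\<close>, the convention of dropping terms with \<open>mu = 0\<close> is automatic.\<close>

lemma R_val_eq:
  "R_val D U \<rho> = Re (\<Sum>m<D. \<Sum>n<D. nu D U \<rho> m n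
     * complex_of_real (ln (mu D U \<rho> m) * ln (mu D U \<rho> n)))"
  unfolding R_val_def by (intro arg_cong[where f = Re] sum.cong refl) auto

theorem theorem3:
  fixes D :: nat and \<rho> U :: "nat \<Rightarrow> nat \<Rightarrow> complex"
  assumes "D \<ge> 2"
    and "density_matrix D \<rho>"
    and "unitary_matrix D U"
  shows "R_val D U \<rho> \<le> 5 * (ln (real D))\<^sup>2 / sqrt (D_eff D \<rho>)
                     + 8 * (ln (real D))\<^sup>2 / real D
                     + 4 * (ln (real D))\<^sup>2 / (real D)\<^sup>2"
proof -
  define s where "s = sqrt (\<Sum>k<D. (Re (\<rho> k k))\<^sup>2)"
  define L where "L = (ln (real D))\<^sup>2"
  have s: "0 \<le> s" "s \<le> 1" using density_matrix_purity_le_one[OF assms(2)] by (auto simp: s_def intro: sum_nonneg)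
  have "R_val D U \<rho> \<le> s * (\<Sum>m<D. mu D U \<rho> m * (ln (mu D U \<rho> m))\<^sup>2)"
    unfolding R_val_eq s_def by (rule nu_quadratic_form_le[OF assms(2,3)])
  also have "\<dots> \<le> s * (4 * L + 8 * L / D)"
    using sum_mu_mult_ln_squared_le[OF assms(2,3,1)] s by (intro mult_left_mono) (simp_all add: L_def)
  also have "\<dots> \<le> 5 * L * s + 8 * L / D + 4 * L / (real D)\<^sup>2"
  proof -
    have "s * (8 * L / D) \<le> 8 * L / D" using s by (intro mult_left_le_one_le) (auto simp: L_def)
    moreover have "0 \<le> L * s" "0 \<le> 4 * L / (real D)\<^sup>2" using s by (auto simp: L_def)
    ultimately show ?thesis by (simp add: distrib_left)
  qed
  also have "5 * L * s = 5 * L / sqrt (D_eff D \<rho>)"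
    by (simp add: s_def D_eff_def real_sqrt_divide)
  finally show ?thesis by (simp add: L_def)
qed

end
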